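(* Consider the Variance-shifting Procedure described in the context, with the variance metric of model (I), i.e. $\mathcal{F}(\bar f)=\mathcal{E}$ for every $\bar f$, so $\Delta(\bar f,s^2)=\sum_{ij\in\mathcal{E}}\Delta_{ij}(s^2_{ij})$ with each $\Delta_{ij}$ convex and nondecreasing. Let $\Delta^*=\min\{\Delta(\bar f,\mathbf{V}(\mathcal{A})):(\bar f,\mathcal{A})\text{ compatible}\}$. If the procedure stops at Step 5 of iteration $k$, then $\Delta(\bar f^{k-1},s^2_{k-1})=\Delta^*$.
   Context: Network (DC model): bus set $\mathcal{B}$, $n=|\mathcal{B}|$; line set $\mathcal{E}$, $m=|\mathcal{E}|$; each line $ij$ has susceptance $b_{ij}>0$ and limit $f^{\max}_{ij}>0$. $B$ is the $n\times n$ bus susceptance matrix; $\hat B$ is $B$ with last row and column removed (assumed invertible); $\breve B=\begin{pmatrix}\hat B^{-1}&0\\0&0\end{pmatrix}$ with $i$-th row $\breve B_i$; $\pi_{ij}=\breve B_i^T-\breve B_j^T$. $\mathcal{G}\subseteq\mathcal{B}$ is the set of generator buses, with limits $p_i^{\min}\le p_i^{\max}$ and costs $c_i(p)=c_{i0}p^2+c_{i1}p+c_{i2}$, $c_{i0}\ge 0$. $d\in\mathbb{R}^n$ are loads, $\mu\in\mathbb{R}^n$ mean stochastic injections, $\omega$ a zero-mean random vector with covariance $\Omega$. $\mathcal{K}$ is a given convex set of $n\times n$ participation matrices $\mathcal{A}$ (with rows $\mathcal{A}_i$). Safety parameters $\nu_{ij}\ge0$ (lines) and $\nu_i\ge0$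 (generators) are given. For a matrix $\mathcal{A}$, $\mathbf{V}(\mathcal{A})\in\mathbb{R}^m$ has entries $\mathbf{V}(\mathcal{A})_{ij}=b_{ij}^2\pi_{ij}^T(I-\mathcal{A})\Omega(I-\mathcal{A}^T)\pi_{ij}$ (line flow variances). Compatibility: a pair $(\bar f,\mathcal{A})$ with $\bar f\in\mathbb{R}^m$ is compatible if $\mathcal{A}\in\mathcal{K}$ and there exist $\bar p\in\mathbb{R}^n$ (with $\bar p_i=0$ for $i\notin\mathcal{G}$) and $\bar\theta\in\mathbb{R}^n$ with $B\bar\theta=\bar p+\mu-d$; $\bar f_{ij}=b_{ij}(\bar\theta_i-\bar\theta_j)$ and $|\bar f_{ij}|+\nu_{ij}\sqrt{\mathbf{V}(\mathcal{A})_{ij}}\le f^{\max}_{ij}$ for all $ij\in\mathcal{E}$; and $p_i^{\min}+\nu_i\sqrt{\mathcal{A}_i^T\Omega\mathcal{A}_i}\le\bar p_i\le p_i^{\max}-\nu_i\sqrt{\mathcal{A}_i^T\Omega\mathcal{A}_i}$ for all $i\in\mathcal{G}$ (i.e. they extend to a feasible solution of the safety-constrained DC-OPF, whose objective is $\sum_{i\in\mathcal{G}}[c_{i0}(\bar p_i^2+\mathcal{A}_i^T\Omega\mathcal{A}_i)+c_{i1}\bar p_i+c_{i2}]$). Variance metric (general form): for each line $ij$ a convex nondecreasing function $\Delta_{ij}:[0,\infty)\to[0,\infty)$, and a set $\mathcal{F}(\bar f)\subseteq\mathcal{E}$; $\Delta(\bar f,s^2)=\sum_{ij\in\mathcal{F}(\bar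 f)}\Delta_{ij}(s^2_{ij})$. Subproblems. For $\hat{\mathcal{A}}\in\mathcal{K}$ and $0<\tau<1$, $\mathrm{Reroute}(\hat{\mathcal{A}},\tau)$ is: minimize $\sum_{i\in\mathcal{G}}[c_{i0}(\bar p_i^2+\hat{\mathcal{A}}_i^T\Omega\hat{\mathcal{A}}_i)+c_{i1}\bar p_i+c_{i2}]$ over $\bar p,\bar f,\bar\theta$ subject to $B\bar\theta=\bar p+\mu-d$, $\bar f_{ij}=b_{ij}(\bar\theta_i-\bar\theta_j)$, $|\bar f_{ij}|+\nu_{ij}\sqrt{\mathbf{V}(\hat{\mathcal{A}})_{ij}}\le(1-\tau)f^{\max}_{ij}$ for all $ij\in\mathcal{E}$, and the generator constraints above with $\hat{\mathcal{A}}$. For $\bar f'$, $\mathcal{A}'$, let $\mathbf{T}(\bar f',\mathcal{A}',\tau)=\{ij\in\mathcal{E}:|\bar f'_{ij}|+\nu_{ij}\sqrt{\mathbf{V}(\mathcal{A}')_{ij}}\ge(1-\tau)f^{\max}_{ij}\}$. $\mathrm{VShift}(\bar f',\mathcal{A}',\tau)$ is: minimize $\sum_{ij\in\mathcal{F}(\bar f')}\Delta_{ij}(s_{ij}^2)$ over $s\in\mathbb{R}^m_{\ge0}$, $\mathcal{A}$ subject to $\mathcal{A}\in\mathcal{K}$, $s_{ij}^2\ge\mathbf{V}(\mathcal{A})_{ij}$ for all $ij\in\mathcal{E}$, and $|\bar f'_{ij}|+\nu_{ij}s_{ij}\le f^{\max}_{ij}$ for $ij\in\mathbf{T}(\bar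 f',\mathcal{A}',\tau)$. Variance-shifting Procedure. Input: a feasible solution $(\bar p^0,\bar f^0,\mathcal{A}_0)$ of the safety-constrained problem (so $(\bar f^0,\mathcal{A}_0)$ is compatible), the metric $\Delta$, $0<\tau<1$, and an iteration bound $N\ge1$; set $s^2_0=\mathbf{V}(\mathcal{A}_0)$. For $k=1,\dots,N$: (1) solve $\mathrm{Reroute}(\mathcal{A}_{k-1},\tau)$; if infeasible, stop; else let $(\bar p^k,\bar f^k,\bar\theta^k)$ be an optimal solution. (2) Solve $\mathrm{VShift}(\bar f^k,\mathcal{A}_{k-1},\tau)$, with optimal solution $(\hat s_k,\hat{\mathcal{A}}_k)$. (3) Choose the largest $\lambda\in(0,1]$ such that $(\bar f^k,(1-\lambda)\mathcal{A}_{k-1}+\lambda\hat{\mathcal{A}}_k)$ is compatible. (4) Set $\mathcal{A}_k=(1-\lambda)\mathcal{A}_{k-1}+\lambda\hat{\mathcal{A}}_k$ and $s^2_k=\mathbf{V}(\mathcal{A}_k)$. (5) If $\Delta(\bar f^k,s^2_k)\ge\Delta(\bar f^{k-1},s^2_{k-1})$, stop; otherwise reset $\tau\leftarrow\tau/2$ and continue. *)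

theory Defs
  imports "HOL-Analysis.Convex" "Jordan_Normal_Form.Matrix"
begin

text \<open>Buses are 0..<n (the last bus is n-1); a line is a pair (i,j) of buses,
  with flows oriented from i to j. Vectors over lines are functions on pairs, only their
  values on the line set matter.\<close>

record net =
  nb :: nat
  lines :: "(nat \<times> nat) set"
  susc :: "nat \<times> nat \<Rightarrow> real"
  fmax :: "nat \<times> nat \<Rightarrow> real"
  gens :: "nat set"
  pmin :: "nat \<Rightarrow> real"
  pmax :: "nat \<Rightarrow> real"
  c0 :: "nat \<Rightarrow> real"
  c1 :: "nat \<Rightarrow> real"
  c2 :: "nat \<Rightarrow> real"
  load :: "real vec"
  mu :: "real vec"
  Omega :: "real mat"
  Kset :: "real mat set"
  nu_line :: "nat \<times> nat \<Rightarrow> real"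
  nu_gen :: "nat \<Rightarrow> real"
  Delta :: "nat \<times> nat \<Rightarrow> real \<Rightarrow> real"

definition incid :: "nat \<times> nat \<Rightarrow> nat \<Rightarrow> real" where
  "incid e k = (if k = fst e then 1 else if k = snd e then -1 else 0)"

definition Bmat :: "net \<Rightarrow> real mat" where
  "Bmat N = mat (nb N) (nb N) (\<lambda>(k,l). \<Sum>e\<in>lines N. susc N e * incid e k * incid e l)"

definition hatB :: "net \<Rightarrow> real mat" where
  "hatB N = mat (nb N - 1) (nb N - 1) (\<lambda>(k,l). Bmat N $$ (k,l))"

definition hatB_inv :: "net \<Rightarrow> real mat" where
  "hatB_inv N = (SOME X. X \<in> carrier_mat (nb N - 1) (nb N - 1) \<and>
      hatB N * X = 1\<^sub>m (nb N - 1) \<and> X * hatB N = 1\<^sub>m (nb N - 1))"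

definition breveB :: "net \<Rightarrow> real mat" where
  "breveB N = mat (nb N) (nb N)
     (\<lambda>(k,l). if k < nb N - 1 \<and> l < nb N - 1 then hatB_inv N $$ (k,l) else 0)"

definition piv :: "net \<Rightarrow> nat \<times> nat \<Rightarrow> real vec" where
  "piv N e = row (breveB N) (fst e) - row (breveB N) (snd e)"

definition Vvar :: "net \<Rightarrow> real mat \<Rightarrow> nat \<times> nat \<Rightarrow> real" where
  "Vvar N A e = (susc N e)\<^sup>2 *
     (piv N e \<bullet> (((1\<^sub>m (nb N) - A) * Omega N * (1\<^sub>m (nb N) - transpose_mat A)) *\<^sub>v piv N e))"

definition genvar :: "net \<Rightarrow> real mat \<Rightarrow> nat \<Rightarrow> real" where
  "genvar N A i = row A i \<bullet> (Omega N *\<^sub>v row A i)"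

definition dc_flow :: "net \<Rightarrow> real vec \<Rightarrow> real vec \<Rightarrow> (nat \<times> nat \<Rightarrow> real) \<Rightarrow> bool" where
  "dc_flow N p \<theta> f \<longleftrightarrow> p \<in> carrier_vec (nb N) \<and> \<theta> \<in> carrier_vec (nb N) \<and>
     (\<forall>i<nb N. i \<notin> gens N \<longrightarrow> p $ i = 0) \<and>
     Bmat N *\<^sub>v \<theta> = p + mu N - load N \<and>
     (\<forall>e\<in>lines N. f e = susc N e * (\<theta> $ fst e - \<theta> $ snd e))"

definition line_ok :: "net \<Rightarrow> real mat \<Rightarrow> (nat \<times> nat \<Rightarrow> real) \<Rightarrow> real \<Rightarrow> bool" where
  "line_ok N A f c \<longleftrightarrow>
     (\<forall>e\<in>lines N. \<bar>f e\<bar> + nu_line N e * sqrt (Vvar N A e) \<le> c * fmax N e)"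

definition gen_ok :: "net \<Rightarrow> real mat \<Rightarrow> real vec \<Rightarrow> bool" where
  "gen_ok N A p \<longleftrightarrow> (\<forall>i\<in>gens N.
     pmin N i + nu_gen N i * sqrt (genvar N A i) \<le> p $ i \<and>
     p $ i \<le> pmax N i - nu_gen N i * sqrt (genvar N A i))"

definition scopf_feasible :: "net \<Rightarrow> real vec \<Rightarrow> (nat \<times> nat \<Rightarrow> real) \<Rightarrow> real mat \<Rightarrow> bool" where
  "scopf_feasible N p f A \<longleftrightarrow> A \<in> Kset N \<and>
     (\<exists>\<theta>. dc_flow N p \<theta> f) \<and> line_ok N A f 1 \<and> gen_ok N A p"

definition compatible :: "net \<Rightarrow> (nat \<times> nat \<Rightarrow> real) \<Rightarrow> real mat \<Rightarrow> bool" where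
  "compatible N f A \<longleftrightarrow> (\<exists>p. scopf_feasible N p f A)"

definition cost :: "net \<Rightarrow> real mat \<Rightarrow> real vec \<Rightarrow> real" where
  "cost N A p = (\<Sum>i\<in>gens N. c0 N i * ((p $ i)\<^sup>2 + genvar N A i) + c1 N i * p $ i + c2 N i)"

definition reroute_feasible ::
  "net \<Rightarrow> real mat \<Rightarrow> real \<Rightarrow> real vec \<Rightarrow> (nat \<times> nat \<Rightarrow> real) \<Rightarrow> real vec \<Rightarrow> bool" where
  "reroute_feasible N A \<tau> p f \<theta> \<longleftrightarrow>
     dc_flow N p \<theta> f \<and> line_ok N A f (1 - \<tau>) \<and> gen_ok N A p"

definition reroute_opt ::
  "net \<Rightarrow> real mat \<Rightarrow> real \<Rightarrow> real vec \<Rightarrow> (nat \<times> nat \<Rightarrow> real) \<Rightarrow> real vec \<Rightarrow> bool" where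
  "reroute_opt N A \<tau> p f \<theta> \<longleftrightarrow> reroute_feasible N A \<tau> p f \<theta> \<and>
     (\<forall>p' f' \<theta>'. reroute_feasible N A \<tau> p' f' \<theta>' \<longrightarrow> cost N A p \<le> cost N A p')"

definition Tset :: "net \<Rightarrow> (nat \<times> nat \<Rightarrow> real) \<Rightarrow> real mat \<Rightarrow> real \<Rightarrow> (nat \<times> nat) set" where
  "Tset N f A \<tau> = {e\<in>lines N. \<bar>f e\<bar> + nu_line N e * sqrt (Vvar N A e) \<ge> (1 - \<tau>) * fmax N e}"

text \<open>Variance metric of model (I): F(f) = E for every f, so the metric does not depend on f.\<close>
definition metric :: "net \<Rightarrow> (nat \<times> nat \<Rightarrow> real) \<Rightarrow> (nat \<times> nat \<Rightarrow> real) \<Rightarrow> real" where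
  "metric N f s2 = (\<Sum>e\<in>lines N. Delta N e (s2 e))"

definition vshift_feasible ::
  "net \<Rightarrow> (nat \<times> nat \<Rightarrow> real) \<Rightarrow> real mat \<Rightarrow> real \<Rightarrow> (nat \<times> nat \<Rightarrow> real) \<Rightarrow> real mat \<Rightarrow> bool" where
  "vshift_feasible N f A' \<tau> s A \<longleftrightarrow> A \<in> Kset N \<and>
     (\<forall>e\<in>lines N. 0 \<le> s e \<and> (s e)\<^sup>2 \<ge> Vvar N A e) \<and>
     (\<forall>e\<in>Tset N f A' \<tau>. \<bar>f e\<bar> + nu_line N e * s e \<le> fmax N e)"

definition vshift_opt ::
  "net \<Rightarrow> (nat \<times> nat \<Rightarrow> real) \<Rightarrow> real mat \<Rightarrow> real \<Rightarrow> (nat \<times> nat \<Rightarrow> real) \<Rightarrow> real mat \<Rightarrow> bool" where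
  "vshift_opt N f A' \<tau> s A \<longleftrightarrow> vshift_feasible N f A' \<tau> s A \<and>
     (\<forall>s' B. vshift_feasible N f A' \<tau> s' B \<longrightarrow>
        metric N f (\<lambda>e. (s e)\<^sup>2) \<le> metric N f (\<lambda>e. (s' e)\<^sup>2))"

definition mat_set_convex :: "real mat set \<Rightarrow> bool" where
  "mat_set_convex K \<longleftrightarrow> (\<forall>A\<in>K. \<forall>B\<in>K. \<forall>t::real. 0 \<le> t \<and> t \<le> 1 \<longrightarrow>
     (1 - t) \<cdot>\<^sub>m A + t \<cdot>\<^sub>m B \<in> K)"

definition is_greatest :: "real set \<Rightarrow> real \<Rightarrow> bool" where
  "is_greatest S x \<longleftrightarrow> x \<in> S \<and> (\<forall>y\<in>S. y \<le> x)"

definition is_least :: "real set \<Rightarrow> real \<Rightarrow> bool" where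
  "is_least S x \<longleftrightarrow> x \<in> S \<and> (\<forall>y\<in>S. x \<le> y)"

definition net_wf :: "net \<Rightarrow> bool" where
  "net_wf N \<longleftrightarrow>
     nb N \<ge> 1 \<and> finite (lines N) \<and>
     (\<forall>e\<in>lines N. fst e < nb N \<and> snd e < nb N \<and> fst e \<noteq> snd e \<and>
        susc N e > 0 \<and> fmax N e > 0 \<and> nu_line N e \<ge> 0) \<and>
     invertible_mat (hatB N) \<and>
     gens N \<subseteq> {..<nb N} \<and>
     (\<forall>i\<in>gens N. pmin N i \<le> pmax N i \<and> c0 N i \<ge> 0 \<and> nu_gen N i \<ge> 0) \<and>
     load N \<in> carrier_vec (nb N) \<and> mu N \<in> carrier_vec (nb N) \<and>
     Omega N \<in> carrier_mat (nb N) (nb N) \<and> transpose_mat (Omega N) = Omega N \<and>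
     (\<forall>x\<in>carrier_vec (nb N). x \<bullet> (Omega N *\<^sub>v x) \<ge> 0) \<and>
     Kset N \<subseteq> carrier_mat (nb N) (nb N) \<and> mat_set_convex (Kset N) \<and>
     (\<forall>e\<in>lines N. convex_on {0..} (Delta N e) \<and> mono_on {0..} (Delta N e) \<and>
        (\<forall>x\<ge>0. Delta N e x \<ge> 0))"

end

theory Submission
  imports Defs
begin

text \<open>The line-flow variances are convex in the participation matrix (each is a positive
  semidefinite quadratic form of an affine function of it), so the metric is convex on the
  convex set K. When the procedure stops at step k, convexity along the segment from
  A_(k-1) to the VShift solution forces the metric at A_(k-1) to be at most the VShift
  optimum. For any compatible (g, B), a sufficiently short move from A_(k-1) towards B
  stays feasible for VShift, because the reroute left every line a margin tau_k * f_max;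
  so the VShift optimum is at most the metric at that point, which by convexity is below
  (1 - t) times the metric at A_(k-1) plus t times the metric at B. Hence the metric at
  A_(k-1) is at most the metric at B.\<close>

lemma quadratic_form_eq_double_sum:
  fixes M :: "real mat"
  assumes "M \<in> carrier_mat n n" "x \<in> carrier_vec n"
  shows "x \<bullet> (M *\<^sub>v x) = (\<Sum>i<n. \<Sum>j<n. x $ i * M $$ (i, j) * x $ j)"
  using assms
  by (auto simp: scalar_prod_def sum_distrib_left mult.assoc lessThan_atLeast0 intro!: sum.cong)

lemma psd_quadratic_form_convex_comb:
  fixes M :: "real mat"
  assumes M: "M \<in> carrier_mat n n" and psd: "\<forall>v\<in>carrier_vec n. v \<bullet> (M *\<^sub>v v) \<ge> 0"
    and x: "x \<in> carrier_vec n" and y: "y \<in> carrier_vec n" and z: "z \<in> carrier_vec n"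
    and z_eq: "\<And>i. i < n \<Longrightarrow> z $ i = (1 - t) * x $ i + t * y $ i" and t: "0 \<le> t" "t \<le> 1"
  shows "z \<bullet> (M *\<^sub>v z) \<le> (1 - t) * (x \<bullet> (M *\<^sub>v x)) + t * (y \<bullet> (M *\<^sub>v y))"
proof -
  have xy: "x - y \<in> carrier_vec n" using x y by auto
  have diff: "(x - y) $ i = x $ i - y $ i" if "i < n" for i using x y that by auto
  have "(1 - t) * (x \<bullet> (M *\<^sub>v x)) + t * (y \<bullet> (M *\<^sub>v y)) - z \<bullet> (M *\<^sub>v z)
      = t * (1 - t) * ((x - y) \<bullet> (M *\<^sub>v (x - y)))"
    unfolding quadratic_form_eq_double_sum[OF M x] quadratic_form_eq_double_sum[OF M y]
      quadratic_form_eq_double_sum[OF M z] quadratic_form_eq_double_sum[OF M xy]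
    by (simp add: sum_distrib_left sum_subtractf[symmetric] sum.distrib[symmetric] z_eq diff
        algebra_simps)
  moreover have "t * (1 - t) * ((x - y) \<bullet> (M *\<^sub>v (x - y))) \<ge> 0"
    using psd xy t by auto
  ultimately show ?thesis by linarith
qed

lemma piv_carrier: "piv N e \<in> carrier_vec (nb N)"
  unfolding piv_def breveB_def by (auto simp: row_def)

text \<open>The random part of the flow on line e is susc e * (flow_sens A e \<bullet> \<omega>).\<close>
definition flow_sens :: "net \<Rightarrow> real mat \<Rightarrow> nat \<times> nat \<Rightarrow> real vec" where
  "flow_sens N A e = transpose_mat (1\<^sub>m (nb N) - A) *\<^sub>v piv N e"

lemma flow_sens_carrier: "A \<in> carrier_mat (nb N) (nb N) \<Longrightarrow> flow_sens N A e \<in> carrier_vec (nb N)"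
  unfolding flow_sens_def by (auto intro!: carrier_vecI)

lemma flow_sens_convex_comb:
  assumes "A \<in> carrier_mat (nb N) (nb N)" "B \<in> carrier_mat (nb N) (nb N)" "i < nb N"
  shows "flow_sens N ((1 - t) \<cdot>\<^sub>m A + t \<cdot>\<^sub>m B) e $ i
    = (1 - t) * flow_sens N A e $ i + t * flow_sens N B e $ i"
  using assms piv_carrier[of N e]
  by (simp add: flow_sens_def scalar_prod_def sum_distrib_left sum.distrib[symmetric]
      sum_subtractf[symmetric] algebra_simps)

lemma Vvar_eq_quadratic_form:
  assumes A: "A \<in> carrier_mat (nb N) (nb N)" and Om: "Omega N \<in> carrier_mat (nb N) (nb N)"
  shows "Vvar N A e = (susc N e)\<^sup>2 * (flow_sens N A e \<bullet> (Omega N *\<^sub>v flow_sens N A e))"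
proof -
  let ?M = "1\<^sub>m (nb N) - A"
  have M: "?M \<in> carrier_mat (nb N) (nb N)" using A by auto
  have "(?M * Omega N * transpose_mat ?M) *\<^sub>v piv N e = ?M *\<^sub>v (Omega N *\<^sub>v flow_sens N A e)"
    unfolding flow_sens_def using M Om piv_carrier[of N e]
    by (subst assoc_mult_mat_vec[of _ "nb N" "nb N"]) auto
  moreover have "piv N e \<bullet> (?M *\<^sub>v (Omega N *\<^sub>v flow_sens N A e))
      = flow_sens N A e \<bullet> (Omega N *\<^sub>v flow_sens N A e)"
    unfolding flow_sens_def using M Om piv_carrier[of N e]
    by (subst transpose_vec_mult_scalar[of _ "nb N" "nb N"]) auto
  moreover have "transpose_mat ?M = 1\<^sub>m (nb N) - transpose_mat A"
    using A by (simp add: transpose_minus[of _ "nb N" "nb N"])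
  ultimately show ?thesis unfolding Vvar_def by simp
qed

lemma Vvar_nonneg:
  assumes wf: "net_wf N" and A: "A \<in> carrier_mat (nb N) (nb N)"
  shows "0 \<le> Vvar N A e"
proof -
  have "Omega N \<in> carrier_mat (nb N) (nb N)"
    and "\<forall>x\<in>carrier_vec (nb N). x \<bullet> (Omega N *\<^sub>v x) \<ge> 0"
    using wf unfolding net_wf_def by auto
  then show ?thesis using Vvar_eq_quadratic_form[OF A] flow_sens_carrier[OF A] by auto
qed

lemma Vvar_convex_comb:
  assumes wf: "net_wf N" and A: "A \<in> carrier_mat (nb N) (nb N)" and B: "B \<in> carrier_mat (nb N) (nb N)"
    and t: "0 \<le> t" "t \<le> 1"
  shows "Vvar N ((1 - t) \<cdot>\<^sub>m A + t \<cdot>\<^sub>m B) e \<le> (1 - t) * Vvar N A e + t * Vvar N B e"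
proof -
  have Om: "Omega N \<in> carrier_mat (nb N) (nb N)"
    and psd: "\<forall>x\<in>carrier_vec (nb N). x \<bullet> (Omega N *\<^sub>v x) \<ge> 0"
    using wf unfolding net_wf_def by auto
  define C where "C = (1 - t) \<cdot>\<^sub>m A + t \<cdot>\<^sub>m B"
  have C: "C \<in> carrier_mat (nb N) (nb N)" using A B by (auto simp: C_def)
  have "flow_sens N C e \<bullet> (Omega N *\<^sub>v flow_sens N C e)
      \<le> (1 - t) * (flow_sens N A e \<bullet> (Omega N *\<^sub>v flow_sens N A e))
        + t * (flow_sens N B e \<bullet> (Omega N *\<^sub>v flow_sens N B e))"
    unfolding C_def
    by (rule psd_quadratic_form_convex_comb[OF Om psd flow_sens_carrier[OF A]
          flow_sens_carrier[OF B] flow_sens_carrier[OF C[unfolded C_def]]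
          flow_sens_convex_comb[OF A B] t])
  from mult_left_mono[OF this, of "(susc N e)\<^sup>2"] show ?thesis
    unfolding C_def[symmetric] Vvar_eq_quadratic_form[OF A Om] Vvar_eq_quadratic_form[OF B Om]
      Vvar_eq_quadratic_form[OF C Om]
    by (simp add: algebra_simps)
qed

text \<open>In model (I) the metric ignores its flow argument, so each occurrence may use its own.\<close>
lemma metric_Vvar_convex_comb:
  assumes wf: "net_wf N" and A: "A \<in> carrier_mat (nb N) (nb N)" and B: "B \<in> carrier_mat (nb N) (nb N)"
    and t: "0 \<le> t" "t \<le> 1"
  shows "metric N g (Vvar N ((1 - t) \<cdot>\<^sub>m A + t \<cdot>\<^sub>m B))
    \<le> (1 - t) * metric N g\<^sub>A (Vvar N A) + t * metric N g\<^sub>B (Vvar N B)"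
proof -
  define C where "C = (1 - t) \<cdot>\<^sub>m A + t \<cdot>\<^sub>m B"
  have C: "C \<in> carrier_mat (nb N) (nb N)" using A B by (auto simp: C_def)
  have "Delta N e (Vvar N C e) \<le> (1 - t) * Delta N e (Vvar N A e) + t * Delta N e (Vvar N B e)"
    if e: "e \<in> lines N" for e
  proof -
    have convex: "convex_on {0..} (Delta N e)" and mono: "mono_on {0..} (Delta N e)"
      using wf e unfolding net_wf_def by auto
    have nonneg: "0 \<le> Vvar N A e" "0 \<le> Vvar N B e" "0 \<le> Vvar N C e"
      using Vvar_nonneg[OF wf] A B C by auto
    have "Delta N e (Vvar N C e) \<le> Delta N e ((1 - t) * Vvar N A e + t * Vvar N B e)"
      using nonneg t Vvar_convex_comb[OF wf A B t, of e]
      by (intro mono_onD[OF mono]) (auto simp: C_def)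
    also have "\<dots> \<le> (1 - t) * Delta N e (Vvar N A e) + t * Delta N e (Vvar N B e)"
      using convex_onD[OF convex, of t "Vvar N A e" "Vvar N B e"] nonneg t by simp
    finally show ?thesis .
  qed
  then show ?thesis unfolding metric_def C_def[symmetric]
    by (auto simp: sum_distrib_left sum.distrib[symmetric] intro!: sum_mono)
qed

lemma sqrt_Vvar_convex_comb_le:
  assumes wf: "net_wf N" and A: "A \<in> carrier_mat (nb N) (nb N)" and B: "B \<in> carrier_mat (nb N) (nb N)"
    and t: "0 \<le> t" "t \<le> 1"
  shows "sqrt (Vvar N ((1 - t) \<cdot>\<^sub>m A + t \<cdot>\<^sub>m B) e) \<le> sqrt (Vvar N A e) + sqrt t * sqrt (Vvar N B e)"
proof -
  have VA: "0 \<le> Vvar N A e" and VB: "0 \<le> Vvar N B e"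
    using Vvar_nonneg[OF wf] A B by auto
  have "Vvar N ((1 - t) \<cdot>\<^sub>m A + t \<cdot>\<^sub>m B) e \<le> Vvar N A e + t * Vvar N B e"
    using Vvar_convex_comb[OF wf A B t, of e] mult_nonneg_nonneg[OF t(1) VA]
    by (simp add: algebra_simps)
  then have "sqrt (Vvar N ((1 - t) \<cdot>\<^sub>m A + t \<cdot>\<^sub>m B) e) \<le> sqrt (Vvar N A e + t * Vvar N B e)"
    by (rule real_sqrt_le_mono)
  also have "\<dots> \<le> sqrt (Vvar N A e) + sqrt (t * Vvar N B e)"
    using VA VB t by (intro sqrt_add_le_add_sqrt) auto
  finally show ?thesis by (simp add: real_sqrt_mult)
qed

lemma eventually_line_margin_convex_comb:
  assumes wf: "net_wf N" and A: "A \<in> carrier_mat (nb N) (nb N)" and B: "B \<in> carrier_mat (nb N) (nb N)"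
    and margin: "0 < \<delta>"
  shows "\<forall>\<^sub>F t in at_right 0. \<forall>e\<in>lines N.
    nu_line N e * sqrt (Vvar N ((1 - t) \<cdot>\<^sub>m A + t \<cdot>\<^sub>m B) e)
      \<le> nu_line N e * sqrt (Vvar N A e) + \<delta> * fmax N e"
proof -
  have lines: "finite (lines N)" "\<forall>e\<in>lines N. 0 < fmax N e \<and> 0 \<le> nu_line N e"
    using wf unfolding net_wf_def by auto
  have small: "\<forall>\<^sub>F t in at_right 0. nu_line N e * (sqrt t * sqrt (Vvar N B e)) < \<delta> * fmax N e"
    if e: "e \<in> lines N" for e
  proof -
    have "((\<lambda>t. nu_line N e * (sqrt t * sqrt (Vvar N B e)))
        \<longlongrightarrow> nu_line N e * (sqrt 0 * sqrt (Vvar N B e))) (at_right 0)"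
      by (intro tendsto_intros)
    then have "((\<lambda>t. nu_line N e * (sqrt t * sqrt (Vvar N B e))) \<longlongrightarrow> 0) (at_right 0)"
      by simp
    moreover have "0 < \<delta> * fmax N e" using margin lines(2) e by simp
    ultimately show ?thesis by (rule order_tendstoD(2))
  qed
  have "\<forall>\<^sub>F t in at_right (0::real). 0 \<le> t \<and> t \<le> 1"
    unfolding eventually_at_right_field by (intro exI[of _ 1]) auto
  moreover have "\<forall>\<^sub>F t in at_right 0. \<forall>e\<in>lines N.
      nu_line N e * (sqrt t * sqrt (Vvar N B e)) < \<delta> * fmax N e"
    using small by (intro eventually_ball_finite[OF lines(1)]) blast
  ultimately show ?thesis
  proof eventually_elim
    case (elim t)
    show ?case
    proof
      fix e assume e: "e \<in> lines N"
      have "nu_line N e * sqrt (Vvar N ((1 - t) \<cdot>\<^sub>m A + t \<cdot>\<^sub>m B) e)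
          \<le> nu_line N e * (sqrt (Vvar N A e) + sqrt t * sqrt (Vvar N B e))"
        using lines(2) e elim(1) sqrt_Vvar_convex_comb_le[OF wf A B] by (intro mult_left_mono) auto
      moreover have "nu_line N e * (sqrt t * sqrt (Vvar N B e)) < \<delta> * fmax N e"
        using elim(2) e by blast
      ultimately show "nu_line N e * sqrt (Vvar N ((1 - t) \<cdot>\<^sub>m A + t \<cdot>\<^sub>m B) e)
          \<le> nu_line N e * sqrt (Vvar N A e) + \<delta> * fmax N e"
        by (simp only: distrib_left)
    qed
  qed
qed

lemma le_of_le_convex_comb:
  fixes a b t :: real
  assumes "0 < t" and "a \<le> (1 - t) * a + t * b"
  shows "a \<le> b"
proof -
  have "t * a \<le> t * b" using assms(2) by (simp add: algebra_simps)
  then show ?thesis using assms(1) by simp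
qed

lemma metric_Vvar_le_of_convex_comb_ge:
  assumes wf: "net_wf N" and A: "A \<in> carrier_mat (nb N) (nb N)" and B: "B \<in> carrier_mat (nb N) (nb N)"
    and t: "0 < t" "t \<le> 1"
    and ge: "metric N g (Vvar N A) \<le> metric N h (Vvar N ((1 - t) \<cdot>\<^sub>m A + t \<cdot>\<^sub>m B))"
  shows "metric N g (Vvar N A) \<le> metric N g' (Vvar N B)"
proof (rule le_of_le_convex_comb[OF t(1)])
  show "metric N g (Vvar N A) \<le> (1 - t) * metric N g (Vvar N A) + t * metric N g' (Vvar N B)"
    using ge t metric_Vvar_convex_comb[OF wf A B, of t h g g'] by linarith
qed

lemma metric_Vvar_le_vshift_feasible:
  assumes wf: "net_wf N" and feasible: "vshift_feasible N f A' \<tau> s A"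
  shows "metric N g (Vvar N A) \<le> metric N h (\<lambda>e. (s e)\<^sup>2)"
  unfolding metric_def
proof (rule sum_mono)
  fix e assume e: "e \<in> lines N"
  have mono: "mono_on {0..} (Delta N e)" and "Kset N \<subseteq> carrier_mat (nb N) (nb N)"
    using wf e unfolding net_wf_def by auto
  then have "0 \<le> Vvar N A e"
    using Vvar_nonneg[OF wf] feasible unfolding vshift_feasible_def by blast
  moreover have "Vvar N A e \<le> (s e)\<^sup>2" using feasible e unfolding vshift_feasible_def by blast
  ultimately show "Delta N e (Vvar N A e) \<le> Delta N e ((s e)\<^sup>2)"
    by (intro mono_onD[OF mono]) auto
qed

text \<open>A short enough step from A' towards B is VShift-feasible thanks to the line margin.\<close>
lemma vshift_opt_le_metric_convex_comb:
  assumes wf: "net_wf N" and A': "A' \<in> Kset N" and B: "B \<in> Kset N" and \<tau>: "0 < \<tau>"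
    and margin: "line_ok N A' f (1 - \<tau>)" and opt: "vshift_opt N f A' \<tau> s Ahat"
  obtains t where "0 < t" "t \<le> 1"
    "metric N f (\<lambda>e. (s e)\<^sup>2) \<le> (1 - t) * metric N g (Vvar N A') + t * metric N h (Vvar N B)"
proof -
  have K: "Kset N \<subseteq> carrier_mat (nb N) (nb N)" and K_convex: "mat_set_convex (Kset N)"
    using wf unfolding net_wf_def by auto
  have A'_carrier: "A' \<in> carrier_mat (nb N) (nb N)" and B_carrier: "B \<in> carrier_mat (nb N) (nb N)"
    using A' B K by auto
  have "\<forall>\<^sub>F t in at_right (0::real). 0 < t \<and> t \<le> 1"
    unfolding eventually_at_right_field by (intro exI[of _ 1]) auto
  then have "\<forall>\<^sub>F t in at_right 0. (0 < t \<and> t \<le> 1) \<and> (\<forall>e\<in>lines N.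
      nu_line N e * sqrt (Vvar N ((1 - t) \<cdot>\<^sub>m A' + t \<cdot>\<^sub>m B) e)
        \<le> nu_line N e * sqrt (Vvar N A' e) + \<tau> * fmax N e)"
    by (rule eventually_conj[OF _ eventually_line_margin_convex_comb[OF wf A'_carrier B_carrier \<tau>]])
  then obtain t where t: "0 < t" "t \<le> 1" and step: "\<forall>e\<in>lines N.
      nu_line N e * sqrt (Vvar N ((1 - t) \<cdot>\<^sub>m A' + t \<cdot>\<^sub>m B) e)
        \<le> nu_line N e * sqrt (Vvar N A' e) + \<tau> * fmax N e"
    using eventually_happens'[OF trivial_limit_at_right_real] by blast
  define C where "C = (1 - t) \<cdot>\<^sub>m A' + t \<cdot>\<^sub>m B"
  have C: "C \<in> Kset N" using K_convex A' B t unfolding mat_set_convex_def C_def by auto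
  have V_C: "0 \<le> Vvar N C e" for e using Vvar_nonneg[OF wf] C K by blast
  have "vshift_feasible N f A' \<tau> (\<lambda>e. sqrt (Vvar N C e)) C"
    unfolding vshift_feasible_def
  proof (intro conjI ballI)
    fix e assume "e \<in> Tset N f A' \<tau>"
    then have e: "e \<in> lines N" unfolding Tset_def by blast
    have "\<bar>f e\<bar> + nu_line N e * sqrt (Vvar N A' e) \<le> (1 - \<tau>) * fmax N e"
      using margin e unfolding line_ok_def by blast
    moreover have "nu_line N e * sqrt (Vvar N C e) \<le> nu_line N e * sqrt (Vvar N A' e) + \<tau> * fmax N e"
      using step e unfolding C_def by blast
    ultimately show "\<bar>f e\<bar> + nu_line N e * sqrt (Vvar N C e) \<le> fmax N e"
      by (simp add: algebra_simps)
  qed (use C V_C in auto)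
  then have "metric N f (\<lambda>e. (s e)\<^sup>2) \<le> metric N f (\<lambda>e. (sqrt (Vvar N C e))\<^sup>2)"
    using opt unfolding vshift_opt_def by blast
  also have "\<dots> = metric N f (Vvar N C)"
    using V_C by (simp add: metric_def)
  also have "\<dots> \<le> (1 - t) * metric N g (Vvar N A') + t * metric N h (Vvar N B)"
    unfolding C_def using t by (intro metric_Vvar_convex_comb[OF wf A'_carrier B_carrier]) auto
  finally show ?thesis using t that by blast
qed

lemma compatible_Kset: "compatible N g B \<Longrightarrow> B \<in> Kset N"
  unfolding compatible_def scopf_feasible_def by blast

lemma vshift_step_no_decrease_imp_minimal:
  assumes wf: "net_wf N" and A': "A' \<in> Kset N" and \<tau>: "0 < \<tau>"
    and margin: "line_ok N A' f (1 - \<tau>)" and opt: "vshift_opt N f A' \<tau> s Ahat"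
    and l: "0 < l" "l \<le> 1"
    and no_decrease: "metric N g (Vvar N A') \<le> metric N h (Vvar N ((1 - l) \<cdot>\<^sub>m A' + l \<cdot>\<^sub>m Ahat))"
    and B: "B \<in> Kset N"
  shows "metric N g (Vvar N A') \<le> metric N g' (Vvar N B)"
proof -
  have K: "Kset N \<subseteq> carrier_mat (nb N) (nb N)" using wf unfolding net_wf_def by blast
  have feasible: "vshift_feasible N f A' \<tau> s Ahat" using opt unfolding vshift_opt_def by blast
  then have "Ahat \<in> Kset N" unfolding vshift_feasible_def by blast
  then have "metric N g (Vvar N A') \<le> metric N f (Vvar N Ahat)"
    using A' K by (intro metric_Vvar_le_of_convex_comb_ge[OF wf _ _ l no_decrease]) auto
  also have "\<dots> \<le> metric N f (\<lambda>e. (s e)\<^sup>2)" by (rule metric_Vvar_le_vshift_feasible[OF wf feasible])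
  finally have le_opt: "metric N g (Vvar N A') \<le> metric N f (\<lambda>e. (s e)\<^sup>2)" .
  obtain t where t: "0 < t" "t \<le> 1"
    and opt_le: "metric N f (\<lambda>e. (s e)\<^sup>2) \<le> (1 - t) * metric N g (Vvar N A') + t * metric N g' (Vvar N B)"
    by (rule vshift_opt_le_metric_convex_comb[OF wf A' B \<tau> margin opt])
  show ?thesis by (rule le_of_le_convex_comb[OF t(1) order_trans[OF le_opt opt_le]])
qed

theorem theorem1:
  fixes N :: net and \<tau> :: real and Nit k :: nat
    and p :: "nat \<Rightarrow> real vec" and f :: "nat \<Rightarrow> nat \<times> nat \<Rightarrow> real" and \<theta> :: "nat \<Rightarrow> real vec"
    and A Ahat :: "nat \<Rightarrow> real mat" and shat :: "nat \<Rightarrow> nat \<times> nat \<Rightarrow> real"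
    and lam tau :: "nat \<Rightarrow> real"
  assumes wf: "net_wf N"
    and init: "scopf_feasible N (p 0) (f 0) (A 0)"
    and tau_pos: "0 < \<tau>" and tau_lt1: "\<tau> < 1"
    and k_ge: "1 \<le> k" and k_le: "k \<le> Nit"
    and tau_def: "\<forall>j\<in>{1..k}. tau j = \<tau> / 2 ^ (j - 1)"
    and step1: "\<forall>j\<in>{1..k}. reroute_opt N (A (j - 1)) (tau j) (p j) (f j) (\<theta> j)"
    and step2: "\<forall>j\<in>{1..k}. vshift_opt N (f j) (A (j - 1)) (tau j) (shat j) (Ahat j)"
    and step3: "\<forall>j\<in>{1..k}. is_greatest {l. 0 < l \<and> l \<le> 1 \<and>
                   compatible N (f j) ((1 - l) \<cdot>\<^sub>m A (j - 1) + l \<cdot>\<^sub>m Ahat j)} (lam j)"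
    and step4: "\<forall>j\<in>{1..k}. A j = (1 - lam j) \<cdot>\<^sub>m A (j - 1) + lam j \<cdot>\<^sub>m Ahat j"
    and no_stop: "\<forall>j\<in>{1..<k}. metric N (f j) (Vvar N (A j)) < metric N (f (j - 1)) (Vvar N (A (j - 1)))"
    and stop: "metric N (f k) (Vvar N (A k)) \<ge> metric N (f (k - 1)) (Vvar N (A (k - 1)))"
  shows "is_least {metric N g (Vvar N B) | g B. compatible N g B}
                 (metric N (f (k - 1)) (Vvar N (A (k - 1))))"
proof -
  have k: "k \<in> {1..k}" using k_ge by simp
  have compatible_prev: "compatible N (f (k - 1)) (A (k - 1))"
  proof (cases "k = 1")
    case True
    then show ?thesis using init unfolding compatible_def by auto
  next
    case False
    then have j: "k - 1 \<in> {1..k}" using k_ge by simp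
    then have "compatible N (f (k - 1)) ((1 - lam (k - 1)) \<cdot>\<^sub>m A (k - 1 - 1) + lam (k - 1) \<cdot>\<^sub>m Ahat (k - 1))"
      using step3 unfolding is_greatest_def by blast
    then show ?thesis unfolding step4[rule_format, OF j, symmetric] .
  qed
  have margin: "line_ok N (A (k - 1)) (f k) (1 - tau k)"
    using step1 k unfolding reroute_opt_def reroute_feasible_def by blast
  have tau_k: "0 < tau k" using tau_def[rule_format, OF k] tau_pos by simp
  have lam: "0 < lam k" "lam k \<le> 1" using step3[rule_format, OF k] unfolding is_greatest_def by auto
  have "metric N (f (k - 1)) (Vvar N (A (k - 1))) \<le> metric N g (Vvar N B)" if "compatible N g B" for g B
    using stop unfolding step4[rule_format, OF k]
    by (rule vshift_step_no_decrease_imp_minimal[OF wf compatible_Kset[OF compatible_prev] tau_k margin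
          step2[rule_format, OF k] lam _ compatible_Kset[OF that]])
  then show ?thesis using compatible_prev unfolding is_least_def by blast
qed

end
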